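(* Let $\boldsymbol{X}_1,\dots,\boldsymbol{X}_N\in\mathbb{R}^p$ be data, with $[N]=\mathcal{I}\cup\mathcal{O}$ a disjoint partition into inliers and outliers, and let $B_1,\dots,B_L$ be a partition of $[N]$ into $L$ blocks each of size $B=N/L$, with $N>L$. Assume: (A1) $\{\boldsymbol{X}_i\}_{i\in\mathcal{I}}$ are i.i.d. with distribution $P$; (A2) $\mu_4=\int\|\boldsymbol{x}\|^4P(d\boldsymbol{x})<\infty$; (A3) there exists $\eta>0$ with $L>(2+\eta)|\mathcal{O}|$. No assumption whatsoever is made on $\{\boldsymbol{X}_i\}_{i\in\mathcal{O}}$. Then with probability at least $1-2\exp\!\left(-2L\left(\frac{2}{4+\eta}-\frac{|\mathcal{O}|}{L}\right)^2\right)$, \[\sup_{Q\in\mathcal{Q}_d}\left|\mathrm{MoM}_L^N(f_Q)-Pf_Q\right|\le C\max\left\{\sqrt{\frac{L}{N}},\ \frac{\sqrt{|\mathcal{I}|}}{N}\right\},\] where $C=2\max\left\{\sqrt{\frac{8(4+\eta)C(P)}{\eta}},\ \frac{16\sqrt{(p-d)\mu_4}\,(4+\eta)}{\eta}\right\}$ and $C(P)=(\mu_4+2\mu_2^2)(p-d)+(\mu_2^2-1)(p-d)^2$.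
   Context: $\mathcal{Q}_d$ denotes the set of all $p\times p$ (orthogonal) projection matrices of rank $d$. For $Q\in\mathcal{Q}_d$, $f_Q(\boldsymbol{x})=\boldsymbol{x}^\top(I-Q)\boldsymbol{x}$. For a measure $\mu$, $\mu f=\int f\,d\mu$; in particular $Pf_Q=\int f_Q\,dP$. $P_{B_\ell}$ is the empirical distribution of $\{\boldsymbol{X}_i\}_{i\in B_\ell}$, so $P_{B_\ell}f_Q=\frac1B\sum_{i\in B_\ell}f_Q(\boldsymbol{X}_i)$. The median-of-means objective is $\mathrm{MoM}_L^N(f_Q)=\mathrm{Median}\{P_{B_\ell}f_Q:\ell=1,\dots,L\}$. $\mu_k=\int\|\boldsymbol{x}\|_2^k\,dP$. *)

theory Defs
  imports "HOL-Probability.Probability"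
begin

definition proj_mats :: "nat \<Rightarrow> (real^'p^'p) set" where
  "proj_mats d = {Q. Q ** Q = Q \<and> transpose Q = Q \<and> rank Q = d}"

definition fQ :: "real^'p^'p \<Rightarrow> real^'p \<Rightarrow> real" where
  "fQ Q x = x \<bullet> ((mat 1 - Q) *v x)"

definition median :: "real list \<Rightarrow> real" where
  "median xs = (let ys = sort xs; n = length xs in
     if odd n then ys ! (n div 2) else (ys ! (n div 2 - 1) + ys ! (n div 2)) / 2)"

definition MoM :: "nat \<Rightarrow> (nat \<Rightarrow> nat set) \<Rightarrow> nat \<Rightarrow> ('x \<Rightarrow> real) \<Rightarrow> (nat \<Rightarrow> 'x) \<Rightarrow> real" where
  "MoM L Bl B f xs = median (map (\<lambda>l. (\<Sum>i\<in>Bl l. f (xs i)) / real B) [0..<L])"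

definition moment :: "(real^'p) measure \<Rightarrow> nat \<Rightarrow> real" where
  "moment P k = (\<integral>x. norm x ^ k \<partial>P)"

end

theory Submission
  imports Defs
begin

(*
  Write f_Q(x) = <I - Q, x x^T> (Frobenius inner product). For a block B_l with
  deviation D_l = (1/B) sum_{i in B_l} X_i X_i^T - E[X X^T], the block mean of f_Q differs from
  P f_Q by <I - Q, D_l>, and since |I - Q|^2 = p - d this is at most sqrt (p - d) |D_l|,
  uniformly in Q. A block of inliers has E |D_l|^2 <= mu_4 / B by independence, so by Markov it
  is bad (|D_l|^2 > 2 (4 + eta) mu_4 / (eta B)) with probability at most eta / (2 (4 + eta)).
  Bad events of distinct inlier blocks are independent, and Hoeffding's inequality shows that
  with probability at least 1 - exp (-2 L (2 / (4 + eta) - |O| / L)^2) fewer than L/2 - |O| of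
  them are bad. At most |O| blocks contain an outlier, so more than half of all blocks are good,
  and then so is the median. Only the second term of the constant C is needed.
*)

section \<open>Quadratic forms and projection matrices\<close>

definition outer :: "real^'n \<Rightarrow> real^'n^'n" where
  "outer x = (\<chi> a b. x$a * x$b)"

lemma fQ_eq_inner_outer: "fQ Q x = (mat 1 - Q) \<bullet> outer x"
  unfolding fQ_def outer_def inner_vec_def matrix_vector_mult_def
  by (simp add: sum_distrib_left mult_ac)

lemma norm_outer: "norm (outer x) = norm x ^ 2"
proof -
  have sq: "(\<Sum>a\<in>UNIV. x$a * x$a) = norm x ^ 2"
    by (simp add: power2_norm_eq_inner inner_vec_def)
  have "norm (outer x) ^ 2 = (\<Sum>a\<in>UNIV. x$a * x$a) * (\<Sum>b\<in>UNIV. x$b * x$b)"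
    by (simp add: power2_norm_eq_inner inner_vec_def outer_def sum_product mult_ac)
  also have "\<dots> = (norm x ^ 2) ^ 2"
    by (simp only: sq power2_eq_square)
  finally show ?thesis
    by (metis norm_ge_zero power2_eq_imp_eq zero_le_power2)
qed

lemma borel_measurable_outer [measurable]: "outer \<in> borel_measurable borel"
  unfolding outer_def by (intro borel_measurable_continuous_onI continuous_intros)

lemma norm_sq_eq_trace_if_idempotent_symmetric:
  fixes R :: "real^'n^'n"
  assumes "R ** R = R" "transpose R = R"
  shows "norm R ^ 2 = trace R"
proof -
  have sym: "R$b$a = R$a$b" for a b
    using assms(2) by (metis transpose_def vec_lambda_beta)
  have "norm R ^ 2 = (\<Sum>a\<in>UNIV. (R ** R)$a$a)"
    by (simp add: power2_norm_eq_inner inner_vec_def matrix_matrix_mult_def sym)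
  then show ?thesis using assms(1) by (simp add: trace_def)
qed

lemma trace_eq_rank_if_idempotent_symmetric:
  fixes Q :: "real^'n^'n"
  assumes idem: "Q ** Q = Q" and sym: "transpose Q = Q"
  shows "trace Q = real (rank Q)"
proof -
  define W where "W = range (\<lambda>x. Q *v x)"
  have "subspace W" unfolding W_def
    by (simp add: linear_subspace_image matrix_vector_mul_linear)
  then obtain U where U: "U \<subseteq> W" "pairwise orthogonal U" "\<And>x. x \<in> U \<Longrightarrow> norm x = 1"
     "independent U" "card U = dim W" "span U = W"
    using orthonormal_basis_subspace by blast
  have finU: "finite U" using U(4) independent_imp_finite by blast
  have fixed: "Q *v u = u" if "u \<in> U" for u
  proof -
    obtain y where "u = Q *v y" using U(1) \<open>u \<in> U\<close> unfolding W_def by blast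
    then show ?thesis by (simp add: matrix_vector_mul_assoc idem)
  qed
  have expand: "Q *v x = (\<Sum>u\<in>U. (x \<bullet> u) *\<^sub>R u)" for x
  proof -
    have "Q *v x = (\<Sum>u\<in>U. ((Q *v x) \<bullet> u) *\<^sub>R u)"
      using orthonormal_basis_expand[OF U(2,3) _ finU] U(6) unfolding W_def by auto
    moreover have "(Q *v x) \<bullet> u = x \<bullet> u" if "u \<in> U" for u
    proof -
      have "(Q *v x) \<bullet> u = (u v* Q) \<bullet> x"
        by (metis dot_lmul_matrix inner_commute)
      also have "u v* Q = transpose Q *v u" by simp
      also have "\<dots> = u" using sym fixed[OF that] by simp
      finally show ?thesis by (simp add: inner_commute)
    qed
    ultimately show ?thesis by (metis (no_types, lifting) sum.cong)
  qed
  have "trace Q = (\<Sum>a\<in>UNIV. (Q *v axis a 1) $ a)"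
    by (simp add: trace_def matrix_vector_mult_basis column_def)
  also have "\<dots> = (\<Sum>a\<in>UNIV. \<Sum>u\<in>U. (u $ a) * (u $ a))"
    by (simp add: expand inner_axis' mult_ac)
  also have "\<dots> = (\<Sum>u\<in>U. norm u ^ 2)"
    by (subst sum.swap) (simp add: power2_norm_eq_inner inner_vec_def)
  also have "\<dots> = real (rank Q)"
    using U(3,5) by (simp add: rank_dim_range W_def)
  finally show ?thesis .
qed

lemma norm_sq_I_minus_proj_mats:
  fixes Q :: "real^'n^'n"
  assumes "Q \<in> proj_mats d"
  shows "norm (mat 1 - Q) ^ 2 = real CARD('n) - real d"
proof -
  have Q: "Q ** Q = Q" "transpose Q = Q" "rank Q = d"
    using assms by (auto simp: proj_mats_def)
  have "Q *v (Q *v x) = Q *v x" for x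
    using Q(1) by (metis matrix_vector_mul_assoc)
  then have "(mat 1 - Q) ** (mat 1 - Q) = mat 1 - Q"
    by (simp add: matrix_eq matrix_vector_mul_assoc[symmetric] algebra_simps)
  moreover have "transpose (mat 1 - Q) = mat 1 - Q"
    using Q(2) by (simp add: transpose_def mat_def vec_eq_iff)
  ultimately have "norm (mat 1 - Q) ^ 2 = trace (mat 1 - Q)"
    by (rule norm_sq_eq_trace_if_idempotent_symmetric)
  also have "\<dots> = real CARD('n) - real d"
    using Q trace_eq_rank_if_idempotent_symmetric[OF Q(1,2)] by (simp add: trace_sub trace_I)
  finally show ?thesis .
qed

lemma proj_mats_rank_le: "Q \<in> proj_mats d \<Longrightarrow> d \<le> CARD('n)"
  for Q :: "real^'n^'n"
  using norm_sq_I_minus_proj_mats[of Q d] by (metis of_nat_le_iff diff_ge_0_iff_ge zero_le_power2)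

section \<open>Median of means\<close>

lemma sorted_nth_le_if_card_le:
  fixes ys :: "'a::linorder list"
  assumes "sorted ys" "j < length ys" "card {i. i < length ys \<and> ys!i \<le> b} > j"
  shows "ys!j \<le> b"
proof (rule ccontr)
  assume "\<not> ys!j \<le> b"
  then have "i < j" if "i < length ys" "ys!i \<le> b" for i
    using sorted_nth_mono[OF assms(1), of j i] that by fastforce
  then have "{i. i < length ys \<and> ys!i \<le> b} \<subseteq> {..<j}"
    by blast
  then have "card {i. i < length ys \<and> ys!i \<le> b} \<le> j"
    by (metis card_lessThan card_mono finite_lessThan)
  then show False using assms(3) by simp
qed

lemma sorted_nth_ge_if_card_ge:
  fixes ys :: "'a::linorder list"
  assumes "sorted ys" "j < length ys" "card {i. i < length ys \<and> a \<le> ys!i} > length ys - Suc j"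
  shows "a \<le> ys!j"
proof (rule ccontr)
  assume "\<not> a \<le> ys!j"
  then have "j < i" if "i < length ys" "a \<le> ys!i" for i
    using sorted_nth_mono[OF assms(1), of i j] that assms(2) by fastforce
  then have "{i. i < length ys \<and> a \<le> ys!i} \<subseteq> {j<..<length ys}"
    by auto
  then have "card {i. i < length ys \<and> a \<le> ys!i} \<le> length ys - Suc j"
    by (metis card_greaterThanLessThan card_mono finite_greaterThanLessThan)
  then show False using assms(3) by simp
qed

lemma median_close_if_most_close:
  fixes xs :: "real list"
  assumes many: "real (card {i. i < length xs \<and> \<bar>xs!i - c\<bar> \<le> e}) > real (length xs) / 2"
  shows "\<bar>median xs - c\<bar> \<le> e"
proof -
  define n where "n = length xs"
  define ys where "ys = sort xs"
  have ys: "sorted ys" "length ys = n" by (simp_all add: ys_def n_def)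
  define P where "P y \<longleftrightarrow> \<bar>y - c\<bar> \<le> e" for y
  have "card {i. i < n \<and> P (ys!i)} = length (filter P ys)"
    by (simp add: length_filter_conv_card ys(2))
  also have "\<dots> = card {i. i < length xs \<and> P (xs!i)}"
    by (simp add: ys_def filter_sort length_filter_conv_card)
  finally have "card {i. i < n \<and> \<bar>ys!i - c\<bar> \<le> e} = card {i. i < length xs \<and> \<bar>xs!i - c\<bar> \<le> e}"
    by (simp add: P_def)
  with many have close: "real n / 2 < real (card {i. i < n \<and> \<bar>ys!i - c\<bar> \<le> e})"
    by (simp add: n_def)
  have middle: "\<bar>ys!j - c\<bar> \<le> e" if "j < n" "real j \<le> real n / 2" "real n / 2 \<le> real j + 1" for j
  proof -
    have "card {i. i < n \<and> \<bar>ys!i - c\<bar> \<le> e} \<le> card {i. i < n \<and> ys!i \<le> c + e}"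
      "card {i. i < n \<and> \<bar>ys!i - c\<bar> \<le> e} \<le> card {i. i < n \<and> c - e \<le> ys!i}"
      by (auto intro!: card_mono)
    with close that have "j < card {i. i < n \<and> ys!i \<le> c + e}"
      "n - Suc j < card {i. i < n \<and> c - e \<le> ys!i}"
      by linarith+
    then have "ys!j \<le> c + e" "c - e \<le> ys!j"
      using that(1) ys by (auto intro: sorted_nth_le_if_card_le sorted_nth_ge_if_card_ge)
    then show ?thesis by linarith
  qed
  have "n > 0" using close by (auto simp: n_def)
  show ?thesis
  proof (cases "odd n")
    case True
    then have "\<bar>ys!(n div 2) - c\<bar> \<le> e"
      using \<open>n > 0\<close> by (intro middle) linarith+
    then show ?thesis using True by (simp add: median_def Let_def ys_def n_def)
  next
    case False
    then obtain m where m: "n = 2 * m" "m > 0" using \<open>n > 0\<close> by auto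
    then have "\<bar>ys!(m - 1) - c\<bar> \<le> e" "\<bar>ys!m - c\<bar> \<le> e"
      by (auto intro!: middle simp: of_nat_diff)
    then have "\<bar>(ys!(m - 1) + ys!m) / 2 - c\<bar> \<le> e"
      unfolding abs_le_iff by argo
    then show ?thesis using m
      by (simp add: median_def Let_def ys_def n_def[symmetric])
  qed
qed

lemma MoM_fQ_close:
  fixes Q S :: "real^'n^'n" and xs :: "nat \<Rightarrow> real^'n"
  assumes Q: "Q \<in> proj_mats d"
    and many: "real (card {l. l < L \<and> norm ((1 / real B) *\<^sub>R (\<Sum>i\<in>Bl l. outer (xs i)) - S) ^ 2 \<le> T})
                 > real L / 2"
  shows "\<bar>MoM L Bl B (fQ Q) xs - (mat 1 - Q) \<bullet> S\<bar> \<le> sqrt (real CARD('n) - real d) * sqrt T"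
proof -
  define D where "D l = (1 / real B) *\<^sub>R (\<Sum>i\<in>Bl l. outer (xs i)) - S" for l
  define m where "m l = (\<Sum>i\<in>Bl l. fQ Q (xs i)) / real B" for l
  have k0: "real CARD('n) - real d \<ge> 0"
    using proj_mats_rank_le[OF Q] by simp
  have "norm (mat 1 - Q) = sqrt (real CARD('n) - real d)"
    using norm_sq_I_minus_proj_mats[OF Q] by (metis norm_ge_zero real_sqrt_unique)
  then have "\<bar>m l - (mat 1 - Q) \<bullet> S\<bar> \<le> sqrt (real CARD('n) - real d) * norm (D l)" for l
    using Cauchy_Schwarz_ineq2[of "mat 1 - Q" "D l"]
    by (simp add: m_def D_def fQ_eq_inner_outer inner_sum_right inner_diff_right divide_inverse mult.commute)
  then have "\<bar>m l - (mat 1 - Q) \<bullet> S\<bar> \<le> sqrt (real CARD('n) - real d) * sqrt T" if "norm (D l) ^ 2 \<le> T" for l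
    using order_trans mult_left_mono[OF real_le_rsqrt[OF that] real_sqrt_ge_zero[OF k0]] by blast
  then have "{l. l < L \<and> norm (D l) ^ 2 \<le> T}
      \<subseteq> {l. l < length (map m [0..<L]) \<and> \<bar>map m [0..<L] ! l - (mat 1 - Q) \<bullet> S\<bar> \<le> sqrt (real CARD('n) - real d) * sqrt T}"
    by auto
  then have "card {l. l < L \<and> norm (D l) ^ 2 \<le> T}
      \<le> card {l. l < length (map m [0..<L]) \<and> \<bar>map m [0..<L] ! l - (mat 1 - Q) \<bullet> S\<bar> \<le> sqrt (real CARD('n) - real d) * sqrt T}"
    by (intro card_mono) auto
  with many have "\<bar>median (map m [0..<L]) - (mat 1 - Q) \<bullet> S\<bar> \<le> sqrt (real CARD('n) - real d) * sqrt T"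
    by (intro median_close_if_most_close) (simp add: D_def)
  then show ?thesis by (simp add: MoM_def m_def[abs_def])
qed

lemma card_clean_blocks_ge:
  fixes Bl :: "nat \<Rightarrow> 'a set" and Good Bad :: "'a set"
  assumes cover: "(\<Union>l<L. Bl l) \<subseteq> Good \<union> Bad" and "finite Bad"
    and disj: "\<And>l l'. l < L \<Longrightarrow> l' < L \<Longrightarrow> l \<noteq> l' \<Longrightarrow> Bl l \<inter> Bl l' = {}"
  shows "L \<le> card {l. l < L \<and> Bl l \<subseteq> Good} + card Bad"
proof -
  define K where "K = {l. l < L \<and> \<not> Bl l \<subseteq> Good}"
  define outlier where "outlier l = (SOME i. i \<in> Bl l \<and> i \<notin> Good)" for l
  have outlier: "outlier l \<in> Bl l" "outlier l \<notin> Good" if "l \<in> K" for l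
    using someI_ex[of "\<lambda>i. i \<in> Bl l \<and> i \<notin> Good"] that by (auto simp: K_def outlier_def)
  have "inj_on outlier K"
  proof (rule inj_onI)
    fix l l' assume "l \<in> K" "l' \<in> K" "outlier l = outlier l'"
    then have "outlier l \<in> Bl l \<inter> Bl l'" using outlier by (metis IntI)
    then show "l = l'" using disj \<open>l \<in> K\<close> \<open>l' \<in> K\<close> by (auto simp: K_def)
  qed
  moreover have "outlier ` K \<subseteq> Bad"
  proof
    fix i assume "i \<in> outlier ` K"
    then obtain l where "l \<in> K" "i = outlier l" by blast
    then have "i \<in> Good \<union> Bad" "i \<notin> Good" using outlier cover by (auto simp: K_def)
    then show "i \<in> Bad" by blast
  qed
  ultimately have "card K \<le> card Bad"
    using \<open>finite Bad\<close> by (metis card_inj_on_le)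
  moreover have "card {l. l < L \<and> Bl l \<subseteq> Good} + card K = L"
  proof -
    have "{l. l < L \<and> Bl l \<subseteq> Good} \<union> K = {..<L}" by (auto simp: K_def)
    moreover have "{l. l < L \<and> Bl l \<subseteq> Good} \<inter> K = {}" by (auto simp: K_def)
    ultimately show ?thesis
      using card_Un_disjoint[of "{l. l < L \<and> Bl l \<subseteq> Good}" K] by (simp add: K_def)
  qed
  ultimately show ?thesis by linarith
qed

lemma card_majority_if_few_bad:
  fixes good :: "nat \<Rightarrow> bool"
  assumes "finite J" "J \<subseteq> {..<L}" "real L \<le> real (card J) + K"
    and few: "real (card {l\<in>J. \<not> good l}) < real L / 2 - K"
  shows "real (card {l. l < L \<and> good l}) > real L / 2"
proof -
  have "J = {l\<in>J. \<not> good l} \<union> {l\<in>J. good l}"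
    by auto
  then have "card {l\<in>J. \<not> good l} + card {l\<in>J. good l} = card J"
    using assms(1) card_Un_disjoint[of "{l\<in>J. \<not> good l}" "{l\<in>J. good l}"] by fastforce
  moreover have "card {l\<in>J. good l} \<le> card {l. l < L \<and> good l}"
    using assms(2) by (intro card_mono) auto
  ultimately show ?thesis
    using assms(3) few by linarith
qed

lemma sqrt_threshold_le_constant:
  fixes \<eta> k \<mu> :: real
  assumes "\<eta> > 0" "k \<ge> 0" "\<mu> \<ge> 0" "B > 0"
  shows "sqrt k * sqrt (2 * (4 + \<eta>) * \<mu> / (\<eta> * B)) \<le> 2 * (16 * sqrt (k * \<mu>) * (4 + \<eta>) / \<eta>) * sqrt (1 / B)"
proof -
  define x where "x = (4 + \<eta>) / \<eta>"
  have "2 * (4 + \<eta>) * \<mu> / (\<eta> * B) = \<mu> * (2 * x) * (1 / B)"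
    by (simp add: x_def)
  then have lhs: "sqrt k * sqrt (2 * (4 + \<eta>) * \<mu> / (\<eta> * B)) = sqrt (k * \<mu>) * sqrt (2 * x) * sqrt (1 / B)"
    by (simp only: real_sqrt_mult mult_ac)
  have rhs: "2 * (16 * sqrt (k * \<mu>) * (4 + \<eta>) / \<eta>) = sqrt (k * \<mu>) * (32 * x)"
    by (simp add: x_def)
  have "x \<ge> 1" using assms(1) by (simp add: x_def)
  then have "sqrt (2 * x) \<le> sqrt ((32 * x)^2)"
    by (intro real_sqrt_le_mono) (simp add: power2_eq_square)
  also have "\<dots> = 32 * x"
    using \<open>x \<ge> 1\<close> by (simp only: real_sqrt_abs abs_of_nonneg)
  finally show ?thesis
    unfolding lhs rhs using assms by (intro mult_right_mono mult_left_mono) auto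
qed

section \<open>Sums of independent random variables\<close>

context prob_space
begin

lemma integral_inner_indep_zero_mean:
  fixes Y :: "'i \<Rightarrow> 'a \<Rightarrow> 'b::euclidean_space"
  assumes ind: "indep_vars (\<lambda>_. borel) Y I" and ij: "i \<in> I" "j \<in> I" "i \<noteq> j"
    and int: "integrable M (Y i)" "integrable M (Y j)"
    and mean: "(\<integral>\<omega>. Y i \<omega> \<partial>M) = 0"
  shows "integrable M (\<lambda>\<omega>. Y i \<omega> \<bullet> Y j \<omega>)" and "(\<integral>\<omega>. Y i \<omega> \<bullet> Y j \<omega> \<partial>M) = 0"
proof -
  have "indep_var borel (\<lambda>\<omega>. Y i \<omega> \<bullet> b) borel (\<lambda>\<omega>. Y j \<omega> \<bullet> b)" for b
  proof -
    have "indep_var borel ((\<lambda>f. f i \<bullet> b) \<circ> (\<lambda>\<omega>. restrict (\<lambda>k. Y k \<omega>) {i}))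
                    borel ((\<lambda>f. f j \<bullet> b) \<circ> (\<lambda>\<omega>. restrict (\<lambda>k. Y k \<omega>) {j}))"
      using ij by (intro indep_var_compose[OF indep_var_restrict[OF ind]]) auto
    then show ?thesis by (simp add: comp_def)
  qed
  then have coord: "integrable M (\<lambda>\<omega>. (Y i \<omega> \<bullet> b) * (Y j \<omega> \<bullet> b))"
    "(\<integral>\<omega>. (Y i \<omega> \<bullet> b) * (Y j \<omega> \<bullet> b) \<partial>M) = 0" for b
    using indep_var_integrable indep_var_lebesgue_integral[of "\<lambda>\<omega>. Y i \<omega> \<bullet> b" "\<lambda>\<omega>. Y j \<omega> \<bullet> b"]
      int mean by auto
  have inner: "Y i \<omega> \<bullet> Y j \<omega> = (\<Sum>b\<in>Basis. (Y i \<omega> \<bullet> b) * (Y j \<omega> \<bullet> b))" for \<omega>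
    by (rule euclidean_inner)
  show "integrable M (\<lambda>\<omega>. Y i \<omega> \<bullet> Y j \<omega>)"
    unfolding inner using coord by auto
  show "(\<integral>\<omega>. Y i \<omega> \<bullet> Y j \<omega> \<partial>M) = 0"
    unfolding inner using coord by simp
qed

lemma integral_norm_sum_indep_zero_mean:
  fixes Y :: "'i \<Rightarrow> 'a \<Rightarrow> 'b::euclidean_space"
  assumes ind: "indep_vars (\<lambda>_. borel) Y I" and "finite I"
    and int: "\<And>i. i \<in> I \<Longrightarrow> integrable M (Y i)"
    and int2: "\<And>i. i \<in> I \<Longrightarrow> integrable M (\<lambda>\<omega>. norm (Y i \<omega>) ^ 2)"
    and mean: "\<And>i. i \<in> I \<Longrightarrow> (\<integral>\<omega>. Y i \<omega> \<partial>M) = 0"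
  shows "integrable M (\<lambda>\<omega>. norm (\<Sum>i\<in>I. Y i \<omega>) ^ 2)"
    and "(\<integral>\<omega>. norm (\<Sum>i\<in>I. Y i \<omega>) ^ 2 \<partial>M) = (\<Sum>i\<in>I. \<integral>\<omega>. norm (Y i \<omega>) ^ 2 \<partial>M)"
proof -
  have expand: "norm (\<Sum>i\<in>I. Y i \<omega>) ^ 2 = (\<Sum>i\<in>I. \<Sum>j\<in>I. Y i \<omega> \<bullet> Y j \<omega>)" for \<omega>
    unfolding power2_norm_eq_inner inner_sum_left inner_sum_right by (rule sum.swap)
  have pair: "integrable M (\<lambda>\<omega>. Y i \<omega> \<bullet> Y j \<omega>) \<and>
      (\<integral>\<omega>. Y i \<omega> \<bullet> Y j \<omega> \<partial>M) = (if i = j then \<integral>\<omega>. norm (Y i \<omega>) ^ 2 \<partial>M else 0)"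
    if "i \<in> I" "j \<in> I" for i j
    using int2[of i] integral_inner_indep_zero_mean[OF ind that _ int[of i] int[of j] mean[of i]] that
    by (cases "i = j") (simp_all add: power2_norm_eq_inner)
  show "integrable M (\<lambda>\<omega>. norm (\<Sum>i\<in>I. Y i \<omega>) ^ 2)"
    unfolding expand using pair by auto
  have "(\<integral>\<omega>. norm (\<Sum>i\<in>I. Y i \<omega>) ^ 2 \<partial>M) = (\<Sum>i\<in>I. \<Sum>j\<in>I. \<integral>\<omega>. Y i \<omega> \<bullet> Y j \<omega> \<partial>M)"
    unfolding expand using pair by (simp add: Bochner_Integration.integral_sum integrable_sum)
  also have "\<dots> = (\<Sum>i\<in>I. \<Sum>j\<in>I. if i = j then \<integral>\<omega>. norm (Y i \<omega>) ^ 2 \<partial>M else 0)"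
    using pair by (intro sum.cong refl) blast
  also have "\<dots> = (\<Sum>i\<in>I. \<integral>\<omega>. norm (Y i \<omega>) ^ 2 \<partial>M)"
    using \<open>finite I\<close> by simp
  finally show "(\<integral>\<omega>. norm (\<Sum>i\<in>I. Y i \<omega>) ^ 2 \<partial>M) = (\<Sum>i\<in>I. \<integral>\<omega>. norm (Y i \<omega>) ^ 2 \<partial>M)" .
qed

lemma prob_gt_le_if_integral_le:
  fixes f :: "'a \<Rightarrow> real"
  assumes "integrable M f" "\<And>\<omega>. \<omega> \<in> space M \<Longrightarrow> f \<omega> \<ge> 0"
    and "expectation f \<le> m" "\<alpha> > 0"
  shows "prob {\<omega>\<in>space M. f \<omega> > m / \<alpha>} \<le> \<alpha>"
proof (cases "m > 0")
  case True
  have "prob {\<omega>\<in>space M. f \<omega> > m / \<alpha>} \<le> prob {\<omega>\<in>space M. f \<omega> \<ge> m / \<alpha>}"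
    using assms(1) by (intro finite_measure_mono) auto
  also have "\<dots> \<le> expectation f / (m / \<alpha>)"
    using True assms by (intro integral_Markov_inequality_measure) auto
  also have "\<dots> \<le> \<alpha>"
    using True assms(3,4) by (simp add: field_simps)
  finally show ?thesis .
next
  case False
  moreover have "expectation f \<ge> 0"
    using assms(2) by simp
  ultimately have "m = 0" "expectation f = 0"
    using assms(3) by linarith+
  then have "AE \<omega> in M. \<not> f \<omega> > m / \<alpha>"
    using assms(1,2) by (simp add: integral_nonneg_eq_0_iff_AE) (auto elim: AE_mp)
  then have "prob {\<omega>\<in>space M. f \<omega> > m / \<alpha>} = 0"
    by (rule prob_eq_0_AE)
  then show ?thesis using assms(4) by simp
qed

lemma prob_sum_ge_le_exp_Hoeffding:
  fixes Y :: "'i \<Rightarrow> 'a \<Rightarrow> real"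
  assumes "finite J" "J \<noteq> {}" "indep_vars (\<lambda>_. borel) Y J"
    and range: "\<And>l \<omega>. l \<in> J \<Longrightarrow> Y l \<omega> \<in> {0..1}"
    and expect: "\<And>l. l \<in> J \<Longrightarrow> expectation (Y l) \<le> \<alpha>"
    and "real (card J) * \<alpha> + s \<le> t" "s \<ge> 0"
  shows "prob {\<omega>\<in>space M. (\<Sum>l\<in>J. Y l \<omega>) \<ge> t} \<le> exp (- 2 * s^2 / real (card J))"
proof -
  define \<mu> where "\<mu> = (\<Sum>l\<in>J. expectation (Y l))"
  interpret Hoeffding_ineq M J Y "\<lambda>_. 0" "\<lambda>_. 1" \<mu>
  proof unfold_locales
    show "AE x in M. Y i x \<in> {0..1}" if "i \<in> J" for i
      using range[OF that] by simp
  qed (use assms(1,3) in \<open>simp_all add: \<mu>_def\<close>)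
  have "\<mu> \<le> real (card J) * \<alpha>"
    using sum_mono[of J _ "\<lambda>_. \<alpha>", OF expect] by (simp add: \<mu>_def)
  then have "s \<le> t - \<mu>" using assms(6) by linarith
  have "prob {\<omega>\<in>space M. (\<Sum>l\<in>J. Y l \<omega>) \<ge> t} = prob {\<omega>\<in>space M. (\<Sum>l\<in>J. Y l \<omega>) \<ge> \<mu> + (t - \<mu>)}"
    by simp
  also have "\<dots> \<le> exp (- 2 * (t - \<mu>)^2 / real (card J))"
    using Hoeffding_ineq_ge[of "t - \<mu>"] \<open>s \<le> t - \<mu>\<close> assms(1,2,7) by (simp add: card_gt_0_iff)
  also have "\<dots> \<le> exp (- 2 * s^2 / real (card J))"
    using \<open>s \<le> t - \<mu>\<close> assms(7) by (simp add: power_mono divide_right_mono)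
  finally show ?thesis .
qed

lemma prob_sum_lt_margin_ge:
  fixes Y :: "'i \<Rightarrow> 'a \<Rightarrow> real" and K :: nat
  assumes J: "finite J" "card J \<le> L" "real L \<le> real (card J) + real K"
    and indep: "indep_vars (\<lambda>_. borel) Y J" and range: "\<And>l \<omega>. l \<in> J \<Longrightarrow> Y l \<omega> \<in> {0..1}"
    and expect: "\<And>l. l \<in> J \<Longrightarrow> expectation (Y l) \<le> \<eta> / (2 * (4 + \<eta>))"
    and \<eta>: "\<eta> > 0" "real L > (2 + \<eta>) * real K"
  shows "prob {\<omega>\<in>space M. (\<Sum>l\<in>J. Y l \<omega>) < real L / 2 - real K}
           \<ge> 1 - exp (- 2 * real L * (2 / (4 + \<eta>) - real K / real L)^2)"
proof -
  define A where "A = {\<omega>\<in>space M. (\<Sum>l\<in>J. Y l \<omega>) < real L / 2 - real K}"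
  define s where "s = 2 * real L / (4 + \<eta>) - real K"
  have "real K \<le> (2 + \<eta>) * real K"
    using \<eta>(1) by (simp add: algebra_simps)
  then have "card J > 0" "real L > 0"
    using J \<eta>(2) by linarith+
  have "real (card J) * (\<eta> / (2 * (4 + \<eta>))) \<le> real L * (\<eta> / (2 * (4 + \<eta>)))"
    using J(2) \<eta>(1) by (intro mult_right_mono) auto
  also have "\<dots> = real L / 2 - real K - s"
    using \<eta>(1) by (simp add: s_def field_simps)
  finally have margin: "real (card J) * (\<eta> / (2 * (4 + \<eta>))) + s \<le> real L / 2 - real K"
    by simp
  have "(4 + \<eta>) * real K \<le> 2 * ((2 + \<eta>) * real K)"
    using \<eta>(1) by (simp add: algebra_simps)
  with \<eta>(2) have "(4 + \<eta>) * real K \<le> 2 * real L"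
    by linarith
  then have "s \<ge> 0"
    using \<eta>(1) by (simp add: s_def field_simps)
  have "2 / (4 + \<eta>) - real K / real L = s / real L"
    using \<open>real L > 0\<close> by (simp add: s_def diff_divide_distrib)
  then have exponent: "- 2 * s^2 / real L = - 2 * real L * (2 / (4 + \<eta>) - real K / real L)^2"
    using \<open>real L > 0\<close> by (simp add: power_divide power2_eq_square)
  have "space M - A = {\<omega>\<in>space M. (\<Sum>l\<in>J. Y l \<omega>) \<ge> real L / 2 - real K}"
    by (auto simp: A_def)
  then have "prob (space M - A) \<le> exp (- 2 * s^2 / real (card J))"
    using \<open>card J > 0\<close> prob_sum_ge_le_exp_Hoeffding[OF J(1) _ indep range expect margin \<open>s \<ge> 0\<close>]
    by (simp add: card_gt_0_iff)
  also have "\<dots> \<le> exp (- 2 * real L * (2 / (4 + \<eta>) - real K / real L)^2)"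
    unfolding exponent[symmetric] using \<open>card J > 0\<close> J(2) by (simp add: divide_left_mono)
  finally have "prob (space M - A) \<le> exp (- 2 * real L * (2 / (4 + \<eta>) - real K / real L)^2)" .
  moreover have "(\<lambda>\<omega>. \<Sum>l\<in>J. Y l \<omega>) \<in> borel_measurable M"
    using indep by (intro borel_measurable_sum) (auto simp: indep_vars_def)
  then have "A \<in> events"
    unfolding A_def by measurable
  ultimately show ?thesis
    by (simp add: prob_compl A_def)
qed

end

section \<open>Block means of an i.i.d. sample\<close>

lemma moment_nonneg: "moment P k \<ge> 0"
  unfolding moment_def by (intro integral_nonneg_AE) auto

locale iid_inliers = prob_space M
  for M :: "'a measure" +
  fixes X :: "nat \<Rightarrow> 'a \<Rightarrow> real^'p" and P :: "(real^'p) measure" and Inl :: "nat set"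
  assumes P: "prob_space P" "sets P = sets borel"
    and indep_X: "indep_vars (\<lambda>_. borel) X Inl"
    and distr_X: "\<And>i. i \<in> Inl \<Longrightarrow> distr M borel (X i) = P"
    and fourth_moment: "integrable P (\<lambda>x. norm x ^ 4)"
begin

lemma random_variable_X [measurable]: "i \<in> Inl \<Longrightarrow> X i \<in> borel_measurable M"
  using indep_X unfolding indep_vars_def by blast

lemma borel_measurable_P_iff: "g \<in> borel_measurable P \<longleftrightarrow> g \<in> borel_measurable borel"
  by (subst measurable_cong_sets[OF P(2) refl]) (rule refl)

lemma integrable_X_iff:
  fixes g :: "real^'p \<Rightarrow> 'b::{banach, second_countable_topology}"
  assumes "i \<in> Inl" "g \<in> borel_measurable borel"
  shows "integrable M (\<lambda>\<omega>. g (X i \<omega>)) \<longleftrightarrow> integrable P g"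
  using integrable_distr_eq[OF random_variable_X assms(2)] distr_X assms by simp

lemma integral_X_eq:
  fixes g :: "real^'p \<Rightarrow> 'b::{banach, second_countable_topology}"
  assumes "i \<in> Inl" "g \<in> borel_measurable borel"
  shows "(\<integral>\<omega>. g (X i \<omega>) \<partial>M) = (\<integral>x. g x \<partial>P)"
  using integral_distr[OF random_variable_X assms(2)] distr_X assms by simp

lemma integrable_outer: "integrable P outer"
proof (rule Bochner_Integration.integrable_bound)
  interpret P: prob_space P by (rule P(1))
  show "integrable P (\<lambda>x. 1 + norm x ^ 4)"
    using fourth_moment by simp
  show "outer \<in> borel_measurable P"
    unfolding borel_measurable_P_iff by simp
  have le: "t \<le> 1 + t ^ 2" if "t \<ge> 0" for t :: real
    using that zero_le_power2[of "t - 1"] unfolding power2_diff by simp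
  have "norm (outer x) \<le> 1 + norm x ^ 4" for x :: "real^'p"
    using le[of "norm x ^ 2"] by (simp add: norm_outer flip: power_mult)
  then show "AE x in P. norm (outer x) \<le> norm (1 + norm x ^ 4)"
    by (intro AE_I2) (simp add: order_trans)
qed

definition second_moment :: "real^'p^'p" where
  "second_moment = (\<integral>x. outer x \<partial>P)"

lemma integral_fQ: "(\<integral>x. fQ Q x \<partial>P) = (mat 1 - Q) \<bullet> second_moment"
  unfolding fQ_eq_inner_outer second_moment_def using integrable_outer by simp

lemma integral_norm_outer_centered_le:
  shows "integrable P (\<lambda>x. norm (outer x - second_moment) ^ 2)"
    and "(\<integral>x. norm (outer x - second_moment) ^ 2 \<partial>P) \<le> moment P 4"
proof -
  interpret P: prob_space P by (rule P(1))
  let ?S = second_moment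
  have "outer x \<bullet> outer x = norm x ^ 4" for x
    using norm_outer[of x] by (simp flip: power2_norm_eq_inner power_mult)
  then have expand: "norm (outer x - ?S) ^ 2 = norm x ^ 4 - 2 * (outer x \<bullet> ?S) + ?S \<bullet> ?S" for x
    by (simp add: power2_norm_eq_inner inner_diff_left inner_diff_right inner_commute)
  show "integrable P (\<lambda>x. norm (outer x - ?S) ^ 2)"
    unfolding expand using fourth_moment integrable_outer by simp
  have "(\<integral>x. norm (outer x - ?S) ^ 2 \<partial>P) = moment P 4 - ?S \<bullet> ?S"
    unfolding expand using fourth_moment integrable_outer
    by (simp add: moment_def second_moment_def P.prob_space)
  then show "(\<integral>x. norm (outer x - ?S) ^ 2 \<partial>P) \<le> moment P 4"
    by simp
qed

definition block_deviation :: "nat set \<Rightarrow> 'a \<Rightarrow> real^'p^'p" where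
  "block_deviation Bs \<omega> = (1 / real (card Bs)) *\<^sub>R (\<Sum>i\<in>Bs. outer (X i \<omega>)) - second_moment"

lemma borel_measurable_block_deviation [measurable]:
  "Bs \<subseteq> Inl \<Longrightarrow> block_deviation Bs \<in> borel_measurable M"
  unfolding block_deviation_def
  by (intro borel_measurable_diff borel_measurable_scaleR borel_measurable_sum
      measurable_compose[OF random_variable_X borel_measurable_outer] borel_measurable_const) auto

lemma integral_norm_block_deviation_le:
  assumes Bs: "Bs \<subseteq> Inl" "finite Bs" "Bs \<noteq> {}"
  shows "integrable M (\<lambda>\<omega>. norm (block_deviation Bs \<omega>) ^ 2)"
    and "(\<integral>\<omega>. norm (block_deviation Bs \<omega>) ^ 2 \<partial>M) \<le> moment P 4 / real (card Bs)"
proof -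
  interpret P: prob_space P by (rule P(1))
  define c where "c x = outer x - second_moment" for x
  have c_meas [measurable]: "c \<in> borel_measurable borel"
    unfolding c_def by measurable
  have "indep_vars (\<lambda>_. borel) (\<lambda>i \<omega>. c (X i \<omega>)) Bs"
    using Bs(1) by (intro indep_vars_compose2[OF indep_vars_subset[OF indep_X]]) auto
  moreover have "integrable M (\<lambda>\<omega>. c (X i \<omega>))" "(\<integral>\<omega>. c (X i \<omega>) \<partial>M) = 0"
    "integrable M (\<lambda>\<omega>. norm (c (X i \<omega>)) ^ 2)" if "i \<in> Bs" for i
  proof -
    have i: "i \<in> Inl" using that Bs(1) by auto
    have "integrable P c" "(\<integral>x. c x \<partial>P) = 0"
      using integrable_outer by (simp_all add: c_def[abs_def] second_moment_def P.prob_space)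
    then show "integrable M (\<lambda>\<omega>. c (X i \<omega>))" "(\<integral>\<omega>. c (X i \<omega>) \<partial>M) = 0"
      using integrable_X_iff[OF i c_meas] integral_X_eq[OF i c_meas] by simp_all
    show "integrable M (\<lambda>\<omega>. norm (c (X i \<omega>)) ^ 2)"
      using integrable_X_iff[OF i, of "\<lambda>x. norm (c x) ^ 2"] integral_norm_outer_centered_le(1)
      by (simp add: c_def)
  qed
  ultimately have sum_c: "integrable M (\<lambda>\<omega>. norm (\<Sum>i\<in>Bs. c (X i \<omega>)) ^ 2)"
    "(\<integral>\<omega>. norm (\<Sum>i\<in>Bs. c (X i \<omega>)) ^ 2 \<partial>M) = (\<Sum>i\<in>Bs. \<integral>\<omega>. norm (c (X i \<omega>)) ^ 2 \<partial>M)"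
    using integral_norm_sum_indep_zero_mean[of "\<lambda>i \<omega>. c (X i \<omega>)" Bs] Bs(2) by auto
  have n: "real (card Bs) > 0"
    using Bs by (simp add: card_gt_0_iff)
  have "block_deviation Bs \<omega> = (1 / real (card Bs)) *\<^sub>R (\<Sum>i\<in>Bs. c (X i \<omega>))" for \<omega>
    using n by (simp add: block_deviation_def c_def sum_subtractf scaleR_diff_right sum_constant_scaleR
        del: sum_constant)
  then have dev: "norm (block_deviation Bs \<omega>) ^ 2 = norm (\<Sum>i\<in>Bs. c (X i \<omega>)) ^ 2 / real (card Bs) ^ 2" for \<omega>
    by (simp add: power_divide)
  show "integrable M (\<lambda>\<omega>. norm (block_deviation Bs \<omega>) ^ 2)"
    unfolding dev using sum_c(1) by simp
  have "(\<Sum>i\<in>Bs. \<integral>\<omega>. norm (c (X i \<omega>)) ^ 2 \<partial>M) \<le> (\<Sum>i\<in>Bs. moment P 4)"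
  proof (intro sum_mono)
    fix i assume "i \<in> Bs"
    then have "(\<integral>\<omega>. norm (c (X i \<omega>)) ^ 2 \<partial>M) = (\<integral>x. norm (outer x - second_moment) ^ 2 \<partial>P)"
      using Bs(1) integral_X_eq[of i "\<lambda>x. norm (c x) ^ 2"] by (auto simp: c_def)
    then show "(\<integral>\<omega>. norm (c (X i \<omega>)) ^ 2 \<partial>M) \<le> moment P 4"
      using integral_norm_outer_centered_le(2) by simp
  qed
  then show "(\<integral>\<omega>. norm (block_deviation Bs \<omega>) ^ 2 \<partial>M) \<le> moment P 4 / real (card Bs)"
    unfolding dev using sum_c(2) n by (simp add: power2_eq_square field_simps)
qed

lemma expectation_block_deviation_large_le:
  assumes "Bs \<subseteq> Inl" "finite Bs" "Bs \<noteq> {}" "\<alpha> > 0"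
  shows "expectation (\<lambda>\<omega>. of_bool (norm (block_deviation Bs \<omega>) ^ 2 > moment P 4 / (\<alpha> * real (card Bs))) :: real)
           \<le> \<alpha>"
proof -
  let ?A = "{\<omega>\<in>space M. norm (block_deviation Bs \<omega>) ^ 2 > moment P 4 / (\<alpha> * real (card Bs))}"
  have "expectation (\<lambda>\<omega>. of_bool (norm (block_deviation Bs \<omega>) ^ 2 > moment P 4 / (\<alpha> * real (card Bs))) :: real)
      = expectation (indicator ?A)"
    by (intro Bochner_Integration.integral_cong) (auto simp: indicator_def)
  also have "\<dots> = prob ?A"
    using assms(1) by (simp add: Int_absorb2 Collect_subset)
  also have "\<dots> \<le> \<alpha>"
    using prob_gt_le_if_integral_le[OF integral_norm_block_deviation_le(1)[OF assms(1-3)] _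
        integral_norm_block_deviation_le(2)[OF assms(1-3)] assms(4)]
    by (simp add: mult.commute)
  finally show ?thesis .
qed

lemma indep_vars_block_deviation:
  fixes h :: "real^'p^'p \<Rightarrow> real"
  assumes "\<And>l. l \<in> J \<Longrightarrow> Bl l \<subseteq> Inl" "disjoint_family_on Bl J" "h \<in> borel_measurable borel"
  shows "indep_vars (\<lambda>_. borel) (\<lambda>l \<omega>. h (block_deviation (Bl l) \<omega>)) J"
proof -
  define g where "g l f = h ((1 / real (card (Bl l))) *\<^sub>R (\<Sum>i\<in>Bl l. outer (f i)) - second_moment)"
    for l and f :: "nat \<Rightarrow> real^'p"
  have "(\<lambda>f. outer (f i)) \<in> borel_measurable (PiM (Bl l) (\<lambda>_. borel))" if "i \<in> Bl l" for i l
    using that by measurable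
  then have g_meas: "g l \<in> borel_measurable (PiM (Bl l) (\<lambda>_. borel))" for l
    unfolding g_def using assms(3) by measurable
  have "indep_vars (\<lambda>_. borel) (\<lambda>l \<omega>. g l (restrict (\<lambda>i. X i \<omega>) (Bl l))) J"
    by (rule indep_vars_compose2[OF indep_vars_restrict[OF indep_X assms(1,2)] g_meas])
  moreover have "g l (restrict (\<lambda>i. X i \<omega>) (Bl l)) = h (block_deviation (Bl l) \<omega>)" for l \<omega>
    unfolding g_def block_deviation_def by (simp cong: sum.cong)
  ultimately show ?thesis by simp
qed

lemma many_blocks_concentrated:
  fixes Bl :: "nat \<Rightarrow> nat set" and Outl :: "nat set"
  assumes cover: "(\<Union>l<L. Bl l) \<subseteq> Inl \<union> Outl" and "finite Outl"
    and disj: "\<And>l l'. l < L \<Longrightarrow> l' < L \<Longrightarrow> l \<noteq> l' \<Longrightarrow> Bl l \<inter> Bl l' = {}"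
    and size: "\<And>l. l < L \<Longrightarrow> card (Bl l) = B" and "B > 0"
    and \<eta>: "\<eta> > 0" "real L > (2 + \<eta>) * real (card Outl)"
  defines "T \<equiv> 2 * (4 + \<eta>) * moment P 4 / (\<eta> * real B)"
  shows "\<exists>E\<in>sets M. prob E \<ge> 1 - exp (- 2 * real L * (2 / (4 + \<eta>) - real (card Outl) / real L)^2) \<and>
     (\<forall>\<omega>\<in>E. real (card {l. l < L \<and> norm (block_deviation (Bl l) \<omega>) ^ 2 \<le> T}) > real L / 2)"
proof -
  define J where "J = {l. l < L \<and> Bl l \<subseteq> Inl}"
  define bad where "bad l \<omega> = (of_bool (norm (block_deviation (Bl l) \<omega>) ^ 2 > T) :: real)" for l \<omega>
  define E where "E = {\<omega>\<in>space M. (\<Sum>l\<in>J. bad l \<omega>) < real L / 2 - real (card Outl)}"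
  have J: "finite J" "card J \<le> L" "real L \<le> real (card J) + real (card Outl)"
    using card_mono[of "{..<L}" J] card_clean_blocks_ge[OF cover \<open>finite Outl\<close> disj]
    by (auto simp: J_def)
  have block: "Bl l \<subseteq> Inl" "finite (Bl l)" "Bl l \<noteq> {}" "card (Bl l) = B" if "l \<in> J" for l
    using that size[of l] \<open>B > 0\<close> by (auto simp: J_def intro: card_ge_0_finite)
  have indep: "indep_vars (\<lambda>_. borel) bad J"
    unfolding bad_def using disj block(1)
    by (intro indep_vars_block_deviation) (auto simp: disjoint_family_on_def J_def)
  (* The failure rate eta / (2 (4 + eta)) is the largest one for which L/2 minus the expected
     number of bad blocks still leaves the Hoeffding margin 2 L / (4 + eta). *)
  have "expectation (bad l) \<le> \<eta> / (2 * (4 + \<eta>))" if "l \<in> J" for l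
  proof -
    have T_eq: "T = moment P 4 / (\<eta> / (2 * (4 + \<eta>)) * real (card (Bl l)))"
      using \<eta>(1) by (simp add: T_def block(4)[OF that])
    show ?thesis
      unfolding bad_def T_eq using \<eta>(1) by (intro expectation_block_deviation_large_le[OF block(1-3)[OF that]]) simp
  qed
  then have "prob E \<ge> 1 - exp (- 2 * real L * (2 / (4 + \<eta>) - real (card Outl) / real L)^2)"
    unfolding E_def using \<eta> by (intro prob_sum_lt_margin_ge[OF J indep]) (auto simp: bad_def)
  moreover have "E \<in> sets M"
    unfolding E_def bad_def using block(1) by measurable
  moreover have "real L / 2 < real (card {l. l < L \<and> norm (block_deviation (Bl l) \<omega>) ^ 2 \<le> T})"
    if "\<omega> \<in> E" for \<omega>
    using that J by (intro card_majority_if_few_bad) (auto simp: E_def bad_def J_def not_le Int_def)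
  ultimately show ?thesis by blast
qed

lemma MoM_fQ_deviation_le:
  assumes Q: "Q \<in> proj_mats d" and size: "\<And>l. l < L \<Longrightarrow> card (Bl l) = B" and "B > 0" "\<eta> > 0"
    and many: "real (card {l. l < L \<and> norm (block_deviation (Bl l) \<omega>) ^ 2 \<le> 2 * (4 + \<eta>) * moment P 4 / (\<eta> * real B)})
                 > real L / 2"
  shows "\<bar>MoM L Bl B (fQ Q) (\<lambda>i. X i \<omega>) - (\<integral>x. fQ Q x \<partial>P)\<bar>
           \<le> 2 * (16 * sqrt ((real CARD('p) - real d) * moment P 4) * (4 + \<eta>) / \<eta>) * sqrt (1 / real B)"
proof -
  define T where "T = 2 * (4 + \<eta>) * moment P 4 / (\<eta> * real B)"
  have "{l. l < L \<and> norm (block_deviation (Bl l) \<omega>) ^ 2 \<le> T}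
      = {l. l < L \<and> norm ((1 / real B) *\<^sub>R (\<Sum>i\<in>Bl l. outer (X i \<omega>)) - second_moment) ^ 2 \<le> T}"
    by (auto simp: block_deviation_def size)
  then have "\<bar>MoM L Bl B (fQ Q) (\<lambda>i. X i \<omega>) - (\<integral>x. fQ Q x \<partial>P)\<bar> \<le> sqrt (real CARD('p) - real d) * sqrt T"
    using MoM_fQ_close[OF Q] many by (simp add: integral_fQ T_def)
  also have "\<dots> \<le> 2 * (16 * sqrt ((real CARD('p) - real d) * moment P 4) * (4 + \<eta>) / \<eta>) * sqrt (1 / real B)"
    unfolding T_def using assms(3,4) proj_mats_rank_le[OF Q] moment_nonneg
    by (intro sqrt_threshold_le_constant) auto
  finally show ?thesis .
qed

end

theorem theorem2:
  fixes M :: "'a measure"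
    and X :: "nat \<Rightarrow> 'a \<Rightarrow> real^'p"
    and P :: "(real^'p) measure"
    and N L B d :: nat
    and Inl Outl :: "nat set"
    and Bl :: "nat \<Rightarrow> nat set"
    and \<eta> :: real
  assumes M: "prob_space M"
    and P: "prob_space P" "sets P = sets borel"
    and part: "Inl \<union> Outl = {..<N}" "Inl \<inter> Outl = {}"
    and blocks: "(\<Union>l<L. Bl l) = {..<N}"
      "\<And>l l'. l < L \<Longrightarrow> l' < L \<Longrightarrow> l \<noteq> l' \<Longrightarrow> Bl l \<inter> Bl l' = {}"
      "\<And>l. l < L \<Longrightarrow> card (Bl l) = B"
      "N = L * B"
    and NL: "N > L"
    and A1: "prob_space.indep_vars M (\<lambda>_. borel) X Inl"
      "\<And>i. i \<in> Inl \<Longrightarrow> distr M borel (X i) = P"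
    and A2: "integrable P (\<lambda>x. norm x ^ 4)"
    and A3: "\<eta> > 0" "real L > (2 + \<eta>) * real (card Outl)"
  shows "\<exists>E\<in>sets M.
     measure M E \<ge> 1 - 2 * exp (- 2 * real L * (2 / (4 + \<eta>) - real (card Outl) / real L)^2) \<and>
     (\<forall>\<omega>\<in>E. \<forall>Q\<in>proj_mats d.
        \<bar>MoM L Bl B (fQ Q) (\<lambda>i. X i \<omega>) - (\<integral>x. fQ Q x \<partial>P)\<bar>
        \<le> (let p = real CARD('p); \<mu>2 = moment P 2; \<mu>4 = moment P 4;
               CP = (\<mu>4 + 2 * \<mu>2^2) * (p - real d) + (\<mu>2^2 - 1) * (p - real d)^2;
               C = 2 * max (sqrt (8 * (4 + \<eta>) * CP / \<eta>))
                           (16 * sqrt ((p - real d) * \<mu>4) * (4 + \<eta>) / \<eta>)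
            in C * max (sqrt (real L / real N)) (sqrt (real (card Inl)) / real N)))"
proof -
  interpret iid_inliers M X P Inl
    using M P A1 A2 by (simp add: iid_inliers_def iid_inliers_axioms_def)
  have "B > 0" using NL blocks(4) by (cases B) auto
  have "L > 0" using NL blocks(4) by (cases L) auto
  then have LN: "real L / real N = 1 / real B"
    using blocks(4) by simp
  have cover: "(\<Union>l<L. Bl l) \<subseteq> Inl \<union> Outl" "finite Outl"
    using blocks(1) part(1) by (auto intro: finite_subset[of Outl "{..<N}"])
  obtain E where E: "E \<in> sets M"
      "prob E \<ge> 1 - exp (- 2 * real L * (2 / (4 + \<eta>) - real (card Outl) / real L)^2)"
      "\<And>\<omega>. \<omega> \<in> E \<Longrightarrow> real (card {l. l < L \<and>
         norm (block_deviation (Bl l) \<omega>) ^ 2 \<le> 2 * (4 + \<eta>) * moment P 4 / (\<eta> * real B)}) > real L / 2"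
    using many_blocks_concentrated[OF cover blocks(2,3) \<open>B > 0\<close> A3] by blast
  have dev: "\<bar>MoM L Bl B (fQ Q) (\<lambda>i. X i \<omega>) - (\<integral>x. fQ Q x \<partial>P)\<bar>
      \<le> 2 * (16 * sqrt ((real CARD('p) - real d) * moment P 4) * (4 + \<eta>) / \<eta>) * sqrt (real L / real N)"
    if "\<omega> \<in> E" "Q \<in> proj_mats d" for \<omega> and Q :: "real^'p^'p"
    unfolding LN by (rule MoM_fQ_deviation_le[OF that(2) blocks(3) \<open>B > 0\<close> A3(1) E(3)[OF that(1)]])
  have nonneg: "0 \<le> 16 * sqrt ((real CARD('p) - real d) * moment P 4) * (4 + \<eta>) / \<eta>"
    if "Q \<in> proj_mats d" for Q :: "real^'p^'p"
    using proj_mats_rank_le[OF that] moment_nonneg[of P 4] A3(1) by simp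
  show ?thesis
    unfolding Let_def
  proof (intro bexI[OF _ E(1)] conjI ballI)
    show "prob E \<ge> 1 - 2 * exp (- 2 * real L * (2 / (4 + \<eta>) - real (card Outl) / real L)^2)"
      using E(2) exp_ge_zero[of "- 2 * real L * (2 / (4 + \<eta>) - real (card Outl) / real L)^2"] by linarith
  qed (rule order_trans[OF dev], assumption+,
       intro mult_mono max.cobounded2 max.cobounded1; use nonneg in \<open>simp add: le_max_iff_disj\<close>)
qed

end
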